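(* There exists an absolute constant $L$ such that for all $t\in\mathbb N$ and all real $\vartheta$ with $\lvert\vartheta\rvert\le\pi$ we have \[ \Bigl\lvert\gamma_t(\vartheta)-\exp\Bigl(-\frac{v_t}{2}\vartheta^2\Bigr)\Bigr\rvert\le LN\lvert\vartheta\rvert^3, \] where $N=\lvert t\rvert_{\mathtt{01}}$.
   Context: For $n\in\mathbb N=\{0,1,\dots\}$, $\lvert n\rvert_{\mathtt{01}}$ denotes the number of maximal blocks of $\mathtt 1$s in the binary expansion of $n$ (equivalently, the number of occurrences of $\mathtt{01}$ after padding with a leading $\mathtt 0$). Let $\mathsf r(n)$ be the number of (overlapping) occurrences of $\mathtt{11}$ in the binary expansion of $n$, $d(t,n)=\mathsf r(n+t)-\mathsf r(n)$, and $c_t(k)$ the asymptotic density (which exists) of $\{n\in\mathbb N:d(t,n)=k\}$, $k\in\mathbb Z$. Let $\gamma_t(\vartheta)=\sum_{k\in\mathbb Z}c_t(k)\exp(ik\vartheta)$. Define $(v_t)_{t\in\mathbb N}$ by $v_0=0$, $v_1=3/2$, $v_{4t}=v_{2t}$, $v_{4t+2}=v_{2t+1}+1$, $v_{2t+1}=\frac{v_t+v_{t+1}}2+\frac34$ (this is the variance of the distribution $c_t$). *)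

theory Defs
  imports "HOL-Analysis.Analysis"
begin

text \<open>Number of maximal blocks of 1s in the binary expansion of n
  (= occurrences of 01 after padding with a leading 0): read the
  binary expansion from the least significant bit; a block ends
  (towards the top) exactly at a position where the bit is 1 and the
  next higher bit is 0, i.e. where the two lowest bits of the shifted
  number are 01.\<close>
fun blocks01 :: "nat \<Rightarrow> nat" where
  "blocks01 n = (if n = 0 then 0
      else (if n mod 4 = 1 then 1 else 0) + blocks01 (n div 2))"

fun r11 :: "nat \<Rightarrow> nat" where
  "r11 n = (if n = 0 then 0
      else (if n mod 4 = 3 then 1 else 0) + r11 (n div 2))"

definition dd :: "nat \<Rightarrow> nat \<Rightarrow> int" where
  "dd t n = int (r11 (n + t)) - int (r11 n)"

text \<open>Asymptotic density of {n. d(t,n) = k} (it exists, as stated in the paper).\<close>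
definition cdens :: "nat \<Rightarrow> int \<Rightarrow> real" where
  "cdens t k = lim (\<lambda>M. real (card {n. n < M \<and> dd t n = k}) / real M)"

definition gam :: "nat \<Rightarrow> real \<Rightarrow> complex" where
  "gam t \<theta> = (\<Sum>\<^sub>\<infinity> k\<in>(UNIV :: int set).
      complex_of_real (cdens t k) * exp (\<i> * of_int k * complex_of_real \<theta>))"

function vv :: "nat \<Rightarrow> real" where
  "vv n = (if n = 0 then 0 else if n = 1 then 3/2
      else if even n then
        (if even (n div 2) then vv (n div 2) else vv (n div 2) + 1)
      else (vv (n div 2) + vv (n div 2 + 1)) / 2 + 3/4)"
  by pat_completeness auto
termination
  by (relation "Wellfounded.measure id") (auto elim!: oddE)

end

(*
  Restrict n to a window [0, 2^K) and split it by the parity e of n.  The resulting sums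
  S_K(t, e) = 2^-K * sum of exp(i d(t,n) theta) obey a recursion in the binary digits of t:
  d(2u + b, 2m + e) is d(u, m) or d(u + 1, m) shifted by -1, 0 or 1 according to parities only,
  so each step averages the two sums of the parent, twisted by exp(+-i theta).  Model S_K(t, e)
  by exp(-v_t theta^2 / 2) (1/2 + B theta^2 + i A theta) with explicit A and B; one step of the
  recursion maps models to models up to O(theta^3), and a weighted maximum of the four errors at
  t and t + 1 grows, by O(theta^3), only when a binary digit of t differs from the next one,
  which happens at most 2N times.  Finally d(t, .) is 2^K-periodic outside at most 2t residues,
  so the window sums converge to gamma_t at rate t / 2^K.
*)

theory Submission
  imports Defs "HOL-Probability.Characteristic_Functions"
begin

lemma cis_approx2: "cmod (cis x - Complex (1 - x\<^sup>2 / 2) x) \<le> \<bar>x\<bar> ^ 3 / 6"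
proof -
  have "(\<Sum>k\<le>2. (\<i> * complex_of_real x) ^ k / fact k) = Complex (1 - x\<^sup>2 / 2) x"
    by (simp add: complex_eq_iff power2_eq_square eval_nat_numeral)
  then show ?thesis
    using iexp_approx1[of x 2] by (simp add: cis_conv_exp eval_nat_numeral)
qed

lemma exp_minus_approx1:
  fixes x :: real
  assumes "0 \<le> x"
  shows "\<bar>exp (- x) - (1 - x)\<bar> \<le> x\<^sup>2"
proof -
  have "exp (- x) * (1 + x) \<le> exp (- x) * exp x"
    by (rule mult_left_mono) simp_all
  also have "\<dots> = 1" by (simp flip: exp_add)
  also have "1 \<le> (1 - x + x\<^sup>2) * (1 + x)"
    using assms by (simp add: algebra_simps power2_eq_square power3_eq_cube)
  finally have "exp (- x) \<le> 1 - x + x\<^sup>2"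
    using assms by (simp add: mult_le_cancel_right)
  then show ?thesis
    using exp_ge_add_one_self[of "- x"] by (simp add: abs_le_iff)
qed

lemma norm_add_avg_diff_le:
  fixes u v w z :: "'a::real_normed_field"
  shows "norm (u + (v + w) / 2 - z) \<le> norm u + (norm v + norm w) / 2 + norm z"
proof -
  have "norm (u + (v + w) / 2 - z) \<le> norm u + norm ((v + w) / 2) + norm z"
    using norm_triangle_ineq4[of "u + (v + w) / 2" z] norm_triangle_ineq[of u "(v + w) / 2"] by linarith
  moreover have "norm ((v + w) / 2) \<le> (norm v + norm w) / 2"
    using norm_triangle_ineq[of v w] by (simp add: norm_divide)
  ultimately show ?thesis by linarith
qed

lemma convergent_if_eventually_close:
  fixes f :: "nat \<Rightarrow> real"
  assumes "\<And>e. 0 < e \<Longrightarrow> \<exists>c. \<forall>\<^sub>F n in sequentially. c \<le> f n \<and> f n \<le> c + e"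
  shows "convergent f"
  unfolding Cauchy_convergent_iff[symmetric]
proof (rule CauchyI)
  fix e :: real assume "0 < e"
  then obtain c where "\<forall>\<^sub>F n in sequentially. c \<le> f n \<and> f n \<le> c + e / 2"
    using assms[of "e / 2"] by auto
  then obtain N where N: "\<And>n. N \<le> n \<Longrightarrow> c \<le> f n \<and> f n \<le> c + e / 2"
    by (auto simp: eventually_sequentially)
  have "norm (f m - f n) < e" if "N \<le> m" "N \<le> n" for m n
    using N[OF that(1)] N[OF that(2)] \<open>0 < e\<close> by (auto simp: abs_less_iff)
  then show "\<exists>N. \<forall>m\<ge>N. \<forall>n\<ge>N. norm (f m - f n) < e"
    by blast
qed

lemma summable_on_diff:
  fixes f g :: "'a \<Rightarrow> 'b::topological_ab_group_add"
  assumes "f summable_on A" "g summable_on A"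
  shows "(\<lambda>x. f x - g x) summable_on A"
  using summable_on_add[OF assms(1) summable_on_uminus[THEN iffD2, OF assms(2)]] by simp

lemma infsum_diff:
  fixes f g :: "'a \<Rightarrow> 'b::{topological_ab_group_add, t2_space}"
  assumes "f summable_on A" "g summable_on A"
  shows "(\<Sum>\<^sub>\<infinity>x\<in>A. f x - g x) = (\<Sum>\<^sub>\<infinity>x\<in>A. f x) - (\<Sum>\<^sub>\<infinity>x\<in>A. g x)"
  using infsum_add[OF assms(1) summable_on_uminus[THEN iffD2, OF assms(2)]] by (simp add: infsum_uminus)

lemma norm_infsum_weighted_diff_le:
  fixes p q :: "'a \<Rightarrow> real" and z :: "'a \<Rightarrow> complex"
  assumes p: "p summable_on UNIV" and q: "q summable_on UNIV"
    and pq: "\<And>x. 0 \<le> q x" "\<And>x. q x \<le> p x" and z: "\<And>x. norm (z x) \<le> 1"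
  shows "norm ((\<Sum>\<^sub>\<infinity>x. of_real (p x) * z x) - (\<Sum>\<^sub>\<infinity>x. of_real (q x) * z x))
    \<le> (\<Sum>\<^sub>\<infinity>x. p x) - (\<Sum>\<^sub>\<infinity>x. q x)"
proof -
  have weighted: "(\<lambda>x. of_real (r x) * z x) summable_on UNIV" if "r summable_on UNIV" "\<And>x. 0 \<le> r x" for r
  proof -
    have "(\<lambda>x. norm (of_real (r x) * z x)) summable_on UNIV"
    proof (rule Infinite_Sum.abs_summable_on_comparison_test[where g = r])
      show "(\<lambda>x. norm (r x)) summable_on UNIV"
        using that by (simp add: summable_on_iff_abs_summable_on_real[symmetric])
      show "norm (of_real (r x) * z x) \<le> norm (r x)" for x
        using z[of x] that(2)[of x] by (simp add: norm_mult mult_left_le)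
    qed
    then show ?thesis
      by (rule abs_summable_summable)
  qed
  have norm_diff: "norm (of_real (p x - q x) * z x) \<le> p x - q x" for x
    using z[of x] pq[of x] unfolding norm_mult norm_of_real by (simp add: mult_left_le)
  have abs_diff: "(\<lambda>x. norm (of_real (p x - q x) * z x)) summable_on UNIV"
    by (rule Infinite_Sum.abs_summable_on_comparison_test'[OF summable_on_diff[OF p q] norm_diff])
  have "norm ((\<Sum>\<^sub>\<infinity>x. of_real (p x) * z x) - (\<Sum>\<^sub>\<infinity>x. of_real (q x) * z x))
      = norm (\<Sum>\<^sub>\<infinity>x. of_real (p x - q x) * z x)"
    unfolding infsum_diff[OF weighted[OF p order_trans[OF pq]] weighted[OF q pq(1)], symmetric]
    by (simp add: left_diff_distrib)
  also have "\<dots> \<le> (\<Sum>\<^sub>\<infinity>x. norm (of_real (p x - q x) * z x))"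
    by (rule norm_infsum_bound[OF abs_diff])
  also have "\<dots> \<le> (\<Sum>\<^sub>\<infinity>x. p x - q x)"
    by (rule infsum_mono[OF abs_diff summable_on_diff[OF p q] norm_diff])
  also have "\<dots> = (\<Sum>\<^sub>\<infinity>x. p x) - (\<Sum>\<^sub>\<infinity>x. q x)"
    by (rule infsum_diff[OF p q])
  finally show ?thesis .
qed

lemma
  fixes f :: "'a \<Rightarrow> 'b::{comm_monoid_add, t2_space}"
  assumes "finite S" "\<And>x. x \<notin> S \<Longrightarrow> f x = 0"
  shows summable_on_finite_support: "f summable_on UNIV"
    and infsum_finite_support: "(\<Sum>\<^sub>\<infinity>x. f x) = (\<Sum>x\<in>S. f x)"
proof -
  show "f summable_on UNIV"
    using summable_on_cong_neutral[of S UNIV f f] assms by auto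
  have "(\<Sum>\<^sub>\<infinity>x. f x) = (\<Sum>\<^sub>\<infinity>x\<in>S. f x)"
    using assms(2) by (intro infsum_cong_neutral) auto
  then show "(\<Sum>\<^sub>\<infinity>x. f x) = (\<Sum>x\<in>S. f x)"
    using assms(1) by simp
qed

lemma card_less_mult_mod_in:
  assumes "A \<subseteq> {..<p}"
  shows "card {n::nat. n < Q * p \<and> n mod p \<in> A} = Q * card A"
proof (induction Q)
  case (Suc Q)
  have "{n. n < Suc Q * p \<and> n mod p \<in> A} = {n. n < Q * p \<and> n mod p \<in> A} \<union> (\<lambda>s. Q * p + s) ` A"
  proof (intro set_eqI iffI)
    fix n assume n: "n \<in> {n. n < Suc Q * p \<and> n mod p \<in> A}"
    show "n \<in> {n. n < Q * p \<and> n mod p \<in> A} \<union> (\<lambda>s. Q * p + s) ` A"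
    proof (cases "n < Q * p")
      case False
      then have "n div p = Q" using n by (simp add: div_nat_eqI mult.commute)
      then have "n = Q * p + n mod p" by (metis div_mult_mod_eq)
      then show ?thesis using n by blast
    qed (use n in simp)
  qed (use assms in auto)
  moreover have "{n. n < Q * p \<and> n mod p \<in> A} \<inter> (\<lambda>s. Q * p + s) ` A = {}" by auto
  moreover have "finite A" using assms finite_subset by blast
  ultimately have "card {n. n < Suc Q * p \<and> n mod p \<in> A}
      = card {n. n < Q * p \<and> n mod p \<in> A} + card ((\<lambda>s. Q * p + s) ` A)"
    by (simp add: card_Un_disjoint)
  then show ?case
    using Suc.IH by (simp add: card_image)
qed simp

section \<open>Binary expansions\<close>

declare vv.simps[simp del] r11.simps[simp del] blocks01.simps[simp del]

lemma r11_0 [simp]: "r11 0 = 0"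
  by (simp add: r11.simps)

lemma r11_double_add: "b < 2 \<Longrightarrow> r11 (2 * m + b) = r11 m + of_bool (b = 1 \<and> odd m)"
proof -
  assume "b < 2"
  then have "(2 * m + b) mod 4 = 3 \<longleftrightarrow> b = 1 \<and> odd m" "(2 * m + b) div 2 = m"
    by presburger+
  then show ?thesis
    by (cases "2 * m + b = 0") (auto simp: r11.simps[of "2 * m + b"])
qed

lemma r11_even: "r11 (2 * m) = r11 m"
  using r11_double_add[of 0 m] by simp

lemma r11_odd: "r11 (2 * m + 1) = r11 m + of_bool (odd m)"
  using r11_double_add[of 1 m] by simp

lemma r11_append:
  "s < 2 ^ Suc k \<Longrightarrow> r11 (2 ^ Suc k * q + s) = r11 q + r11 s + of_bool (odd q \<and> 2 ^ k \<le> s)"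
proof (induction k arbitrary: s)
  case 0
  then have "s < 2" by simp
  then show ?case using r11_double_add[of s q] r11_double_add[of s 0] by auto
next
  case (Suc k)
  define h b where "h = s div 2" and "b = s mod 2"
  have b: "b < 2" and s: "s = 2 * h + b" by (simp_all add: h_def b_def)
  have h: "h < 2 ^ Suc k" "2 ^ k \<le> h \<longleftrightarrow> 2 ^ Suc k \<le> s"
    using Suc.prems by (auto simp: h_def)
  have "r11 (2 ^ Suc (Suc k) * q + s) = r11 (2 * (2 ^ Suc k * q + h) + b)"
    by (simp add: s algebra_simps)
  also have "\<dots> = r11 (2 ^ Suc k * q + h) + of_bool (b = 1 \<and> odd h)"
    using r11_double_add[OF b, of "2 ^ Suc k * q + h"] by simp
  also have "\<dots> = r11 q + r11 s + of_bool (odd q \<and> 2 ^ Suc k \<le> s)"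
    using Suc.IH[OF h(1)] h(2) r11_double_add[OF b, of h] by (simp add: s)
  finally show ?case .
qed

lemma dd_periodic:
  assumes "s + t < 2 ^ Suc k" "s < 2 ^ k \<longleftrightarrow> s + t < 2 ^ k"
  shows "dd t (2 ^ Suc k * q + s) = dd t s"
proof -
  have "r11 (2 ^ Suc k * q + s + t) = r11 q + r11 (s + t) + of_bool (odd q \<and> 2 ^ k \<le> s + t)"
    using r11_append[OF assms(1)] by (simp add: add.assoc)
  moreover have "r11 (2 ^ Suc k * q + s) = r11 q + r11 s + of_bool (odd q \<and> 2 ^ k \<le> s)"
    using assms(1) by (intro r11_append) simp
  ultimately show ?thesis
    using assms(2) by (simp add: dd_def not_less[symmetric])
qed

lemma dd_even_even: "dd (2 * u) (2 * m) = dd u m"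
  unfolding dd_def by (metis r11_even distrib_left)

lemma dd_even_odd: "dd (2 * u) (2 * m + 1) = dd u m + of_bool (odd (m + u)) - of_bool (odd m)"
proof -
  have "2 * m + 1 + 2 * u = 2 * (m + u) + 1" by simp
  then show ?thesis
    unfolding dd_def using r11_odd[of "m + u"] r11_odd[of m] by simp
qed

lemma dd_odd_even: "dd (2 * u + 1) (2 * m) = dd u m + of_bool (odd (m + u))"
proof -
  have "2 * m + (2 * u + 1) = 2 * (m + u) + 1" by simp
  then show ?thesis
    unfolding dd_def using r11_odd[of "m + u"] r11_even[of m] by simp
qed

lemma dd_odd_odd: "dd (2 * u + 1) (2 * m + 1) = dd (u + 1) m - of_bool (odd m)"
proof -
  have "2 * m + 1 + (2 * u + 1) = 2 * (m + (u + 1))" by simp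
  then show ?thesis
    unfolding dd_def using r11_even[of "m + (u + 1)"] r11_odd[of m] by simp
qed

lemma vv_0 [simp]: "vv 0 = 0"
  by (simp add: vv.simps)

lemma vv_1 [simp]: "vv (Suc 0) = 3 / 2"
  by (simp add: vv.simps)

lemma vv_even: "vv (2 * u) = vv u + of_bool (odd u)"
  by (subst vv.simps) auto

lemma vv_odd: "vv (2 * u + 1) = (vv u + vv (u + 1)) / 2 + 3 / 4"
proof (cases "u = 0")
  case True
  then show ?thesis by simp
next
  case False
  then show ?thesis by (subst vv.simps) auto
qed

lemma vv_nonneg: "0 \<le> vv n"
proof (induction n rule: less_induct)
  case (less n)
  consider "n = 0" | "n = 1" | u where "n = 2 * u" "0 < u" | u where "n = 2 * u + 1" "0 < u"
    by (cases "even n"; cases "n div 2 = 0") (auto elim!: evenE oddE)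
  then show ?case
  proof cases
    case (4 u)
    then show ?thesis
      using less[of u] less[of "u + 1"] vv_odd[of u] by simp
  qed (use less in \<open>simp_all add: vv_even\<close>)
qed

lemma vv_Suc_diff: "\<bar>vv (s + 1) - vv s\<bar> \<le> 3 / 2"
proof (induction s rule: less_induct)
  case (less s)
  have halve: "\<bar>w / 2 + c\<bar> \<le> 3 / 2" if "\<bar>w\<bar> \<le> 3 / 2" "\<bar>c\<bar> \<le> 3 / 4" for w c :: real
    using that abs_triangle_ineq[of "w / 2" c] by simp
  consider "s = 0" | u where "s = 2 * u" "0 < u" | u where "s = 2 * u + 1"
    by (cases "even s"; cases "s = 0") (auto elim!: evenE oddE)
  then show ?case
  proof cases
    case 1
    then show ?thesis by simp
  next
    case (2 u)
    have "vv (s + 1) - vv s = (vv (u + 1) - vv u) / 2 + (3 / 4 - of_bool (odd u))"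
      using 2 vv_odd[of u] vv_even[of u] by simp
    also have "\<bar>\<dots>\<bar> \<le> 3 / 2"
      by (rule halve) (use less[of u] 2 in auto)
    finally show ?thesis .
  next
    case (3 u)
    then have "s + 1 = 2 * (u + 1)" by simp
    then have "vv (s + 1) - vv s = (vv (u + 1) - vv u) / 2 + (of_bool (even u) - 3 / 4)"
      using 3 vv_odd[of u] vv_even[of "u + 1"] by (simp add: field_simps)
    also have "\<bar>\<dots>\<bar> \<le> 3 / 2"
      by (rule halve) (use less[of u] 3 in auto)
    finally show ?thesis .
  qed
qed

lemma vv_odd_increment:
  "0 \<le> vv (2 * u + 1) - vv u" "vv (2 * u + 1) - vv u \<le> 3 / 2"
  "0 \<le> vv (2 * u + 1) - vv (u + 1)" "vv (2 * u + 1) - vv (u + 1) \<le> 3 / 2"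
  using vv_Suc_diff[of u] unfolding vv_odd abs_le_iff by (auto simp: field_simps)

fun bit_changes :: "nat \<Rightarrow> nat" where
  "bit_changes n = (if n = 0 then 0 else bit_changes (n div 2) + of_bool (n mod 2 \<noteq> n div 2 mod 2))"

declare bit_changes.simps [simp del]

lemma bit_changes_double_add: "b < 2 \<Longrightarrow> bit_changes (2 * s + b) = bit_changes s + of_bool (b \<noteq> s mod 2)"
  by (cases "2 * s + b = 0") (auto simp: bit_changes.simps[of "2 * s + b"] bit_changes.simps[of 0])

lemma bit_changes_le_blocks01: "bit_changes n + n mod 2 \<le> 2 * blocks01 n"
proof (induction n rule: less_induct)
  case (less n)
  show ?case
  proof (cases "n = 0")
    case False
    have "n mod 4 = 1 \<longleftrightarrow> n mod 2 = 1 \<and> n div 2 mod 2 = 0" by presburger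
    moreover have "n mod 2 < 2" "n div 2 mod 2 < 2" by simp_all
    ultimately show ?thesis
      using less[of "n div 2"] False
      by (auto simp: bit_changes.simps[of n] blocks01.simps[of n])
  qed (simp add: bit_changes.simps)
qed

lemma blocks01_pos: "0 < n \<Longrightarrow> 1 \<le> blocks01 n"
proof (induction n rule: less_induct)
  case (less n)
  show ?case
  proof (cases "n mod 4 = 1")
    case False
    then have "0 < n div 2"
      using less.prems by (cases "n = 1") auto
    then show ?thesis
      using less.IH[of "n div 2"] less.prems by (simp add: blocks01.simps[of n])
  qed (use less.prems in \<open>simp add: blocks01.simps[of n]\<close>)
qed

section \<open>Characteristic sums over a parity class\<close>

definition char_sum :: "nat \<Rightarrow> nat \<Rightarrow> nat \<Rightarrow> real \<Rightarrow> complex" where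
  "char_sum K t e \<theta> = (\<Sum>n | n < 2 ^ K \<and> n mod 2 = e. cis (of_int (dd t n) * \<theta>)) / 2 ^ K"

lemma char_sum_Suc:
  fixes \<alpha> \<beta> :: real
  assumes "e < 2"
    and "\<And>m. even m \<Longrightarrow> of_int (dd t (2 * m + e)) = of_int (dd t' m) + \<alpha>"
    and "\<And>m. odd m \<Longrightarrow> of_int (dd t (2 * m + e)) = of_int (dd t' m) + \<beta>"
  shows "char_sum (Suc K) t e \<theta> =
    (cis (\<alpha> * \<theta>) * char_sum K t' 0 \<theta> + cis (\<beta> * \<theta>) * char_sum K t' 1 \<theta>) / 2"
proof -
  let ?z = "\<lambda>n. cis (of_int (dd t n) * \<theta>)" and ?z' = "\<lambda>n. cis (of_int (dd t' n) * \<theta>)"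
  have "{n. n < 2 ^ Suc K \<and> n mod 2 = e} = (\<lambda>m. 2 * m + e) ` {..<2 ^ K}"
  proof (intro set_eqI iffI)
    fix n assume "n \<in> {n. n < 2 ^ Suc K \<and> n mod 2 = e}"
    then show "n \<in> (\<lambda>m. 2 * m + e) ` {..<2 ^ K}"
      by (intro image_eqI[of _ _ "n div 2"]) auto
  qed (use assms(1) in auto)
  then have "(\<Sum>n | n < 2 ^ Suc K \<and> n mod 2 = e. ?z n) = (\<Sum>m<2 ^ K. ?z (2 * m + e))"
    by (simp add: sum.reindex inj_on_def)
  also have "\<dots> = (\<Sum>m<2 ^ K. if even m then cis (\<alpha> * \<theta>) * ?z' m else cis (\<beta> * \<theta>) * ?z' m)"
  proof (intro sum.cong refl)
    fix m
    show "?z (2 * m + e) = (if even m then cis (\<alpha> * \<theta>) * ?z' m else cis (\<beta> * \<theta>) * ?z' m)"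
      using assms(2,3)[of m] by (auto simp: cis_mult algebra_simps)
  qed
  also have "\<dots> = cis (\<alpha> * \<theta>) * (\<Sum>m | m < 2 ^ K \<and> m mod 2 = 0. ?z' m)
      + cis (\<beta> * \<theta>) * (\<Sum>m | m < 2 ^ K \<and> m mod 2 = 1. ?z' m)"
  proof -
    have "{..<2 ^ K} \<inter> {m. even m} = {m::nat. m < 2 ^ K \<and> m mod 2 = 0}"
      "{..<2 ^ K} \<inter> - {m. even m} = {m::nat. m < 2 ^ K \<and> m mod 2 = 1}"
      by (auto simp: odd_iff_mod_2_eq_one)
    then show ?thesis by (simp add: sum.If_cases sum_distrib_left)
  qed
  finally show ?thesis
    by (simp add: char_sum_def field_simps)
qed

lemma char_sum_even_0:
  "char_sum (Suc K) (2 * u) 0 \<theta> = (char_sum K u 0 \<theta> + char_sum K u 1 \<theta>) / 2"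
  using char_sum_Suc[where \<alpha> = 0 and \<beta> = 0 and e = 0 and t = "2 * u" and t' = u]
  by (simp add: dd_even_even)

lemma char_sum_even_1:
  "char_sum (Suc K) (2 * u) 1 \<theta> =
    (cis (of_bool (odd u) * \<theta>) * char_sum K u 0 \<theta> + cis (- of_bool (odd u) * \<theta>) * char_sum K u 1 \<theta>) / 2"
  by (rule char_sum_Suc) (auto simp: dd_even_odd[simplified])

lemma char_sum_odd_0:
  "char_sum (Suc K) (2 * u + 1) 0 \<theta> =
    (cis (of_bool (odd u) * \<theta>) * char_sum K u 0 \<theta> + cis (of_bool (even u) * \<theta>) * char_sum K u 1 \<theta>) / 2"
  by (rule char_sum_Suc) (auto simp: dd_odd_even[of u, simplified])

lemma char_sum_odd_1:
  "char_sum (Suc K) (2 * u + 1) 1 \<theta> = (char_sum K (u + 1) 0 \<theta> + cis (- \<theta>) * char_sum K (u + 1) 1 \<theta>) / 2"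
  using char_sum_Suc[where \<alpha> = 0 and \<beta> = "- 1" and e = 1 and t = "2 * u + 1" and t' = "u + 1"]
  by (simp add: dd_odd_odd[simplified])

lemma char_sum_zero: "e < 2 \<Longrightarrow> char_sum (Suc K) 0 e \<theta> = 1 / 2"
proof (induction K arbitrary: e)
  case 0
  have "{n::nat. n < 2 \<and> n mod 2 = e} = {e}" using 0 by auto
  then show ?case by (simp add: char_sum_def dd_def)
next
  case (Suc K)
  then show ?case
    using char_sum_even_0[of "Suc K" 0 \<theta>] char_sum_even_1[of "Suc K" 0 \<theta>]
    by (cases e) (simp_all add: Suc.IH)
qed

lemma norm_char_sum_le: "cmod (char_sum K t e \<theta>) \<le> 1"
proof -
  have "cmod (\<Sum>n | n < 2 ^ K \<and> n mod 2 = e. cis (of_int (dd t n) * \<theta>))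
      \<le> card {n::nat. n < 2 ^ K \<and> n mod 2 = e}"
    using norm_sum[of "\<lambda>n. cis (of_int (dd t n) * \<theta>)"] by simp
  also have "card {n::nat. n < 2 ^ K \<and> n mod 2 = e} \<le> card {..<(2::nat) ^ K}"
    by (rule card_mono) auto
  finally show ?thesis
    by (simp add: char_sum_def norm_divide norm_power)
qed

lemma char_sum_add:
  "char_sum K t 0 \<theta> + char_sum K t 1 \<theta> = (\<Sum>n<2 ^ K. cis (of_int (dd t n) * \<theta>)) / 2 ^ K"
proof -
  have "{..<2 ^ K} \<inter> {n. n mod 2 = 0} = {n::nat. n < 2 ^ K \<and> n mod 2 = 0}"
    "{..<2 ^ K} - {n. n mod 2 = 0} = {n::nat. n < 2 ^ K \<and> n mod 2 = 1}"
    by auto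
  then show ?thesis
    using sum.Int_Diff[of "{..<2 ^ K}" "\<lambda>n. cis (of_int (dd t n) * \<theta>)" "{n. n mod 2 = 0}"]
    by (simp add: char_sum_def add_divide_distrib)
qed

section \<open>Gaussian models\<close>

definition gauss_model :: "real \<Rightarrow> real \<Rightarrow> real \<Rightarrow> real \<Rightarrow> complex" where
  "gauss_model v a b \<theta> = complex_of_real (exp (- (v / 2) * \<theta>\<^sup>2)) * Complex (1 / 2 + b * \<theta>\<^sup>2) (a * \<theta>)"

lemma gauss_model_add_var:
  "gauss_model (v + w) a b \<theta> = complex_of_real (exp (- (v / 2) * \<theta>\<^sup>2)) * gauss_model w a b \<theta>"
proof -
  have "exp (- ((v + w) / 2) * \<theta>\<^sup>2) = exp (- (v / 2) * \<theta>\<^sup>2) * exp (- (w / 2) * \<theta>\<^sup>2)"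
    by (simp add: algebra_simps flip: exp_add)
  then show ?thesis by (simp add: gauss_model_def)
qed

lemma gauss_model_add_neg:
  "gauss_model v a b \<theta> + gauss_model v (- a) (- b) \<theta> = complex_of_real (exp (- (v / 2) * \<theta>\<^sup>2))"
  by (simp add: gauss_model_def complex_eq_iff field_simps)

lemma norm_Complex_half_le:
  assumes "\<bar>a\<bar> \<le> A" "\<bar>b\<bar> \<le> B" "\<bar>\<theta>\<bar> \<le> 4"
  shows "cmod (Complex (1 / 2 + b * \<theta>\<^sup>2) (a * \<theta>)) \<le> 1 / 2 + 16 * B + 4 * A"
proof -
  have "\<theta>\<^sup>2 \<le> 4\<^sup>2"
    using power_mono[OF assms(3), of 2] by simp
  then have "\<bar>b * \<theta>\<^sup>2\<bar> \<le> B * 16" "\<bar>a * \<theta>\<bar> \<le> A * 4"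
    using assms by (auto simp: abs_mult intro!: mult_mono)
  then show ?thesis
    using cmod_le[of "Complex (1 / 2 + b * \<theta>\<^sup>2) (a * \<theta>)"] by simp
qed

lemma gauss_model_step_decomposition:
  fixes \<alpha> \<beta> a b \<Delta> x :: real
  defines "B' \<equiv> \<Delta> / 4 - (\<alpha> - \<beta>) * a / 2 - (\<alpha>\<^sup>2 + \<beta>\<^sup>2) / 8"
    and "T \<equiv> \<lambda>c. Complex (1 - (c * x)\<^sup>2 / 2) (c * x)"
  shows "(cis (\<alpha> * x) * gauss_model 0 a b x + cis (\<beta> * x) * gauss_model 0 (- a) (- b) x) / 2
      - gauss_model \<Delta> ((\<alpha> + \<beta>) / 4) B' x
    = Complex (((\<beta>\<^sup>2 - \<alpha>\<^sup>2) * b / 4 + \<Delta> * B' / 2) * x ^ 4)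
        (((\<alpha> - \<beta>) * b / 2 - (\<alpha>\<^sup>2 - \<beta>\<^sup>2) * a / 4 + \<Delta> * (\<alpha> + \<beta>) / 8) * x ^ 3)
      + ((cis (\<alpha> * x) - T \<alpha>) * Complex (1 / 2 + b * x\<^sup>2) (a * x)
        + (cis (\<beta> * x) - T \<beta>) * Complex (1 / 2 - b * x\<^sup>2) (- a * x)) / 2
      - complex_of_real (exp (- (\<Delta> / 2) * x\<^sup>2) - (1 - \<Delta> * x\<^sup>2 / 2)) * Complex (1 / 2 + B' * x\<^sup>2) ((\<alpha> + \<beta>) / 4 * x)"
proof -
  have identity: "(T \<alpha> * Complex (1 / 2 + b * x\<^sup>2) (a * x) + T \<beta> * Complex (1 / 2 - b * x\<^sup>2) (- a * x)) / 2
      - complex_of_real (1 - \<Delta> * x\<^sup>2 / 2) * Complex (1 / 2 + B' * x\<^sup>2) ((\<alpha> + \<beta>) / 4 * x)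
    = Complex (((\<beta>\<^sup>2 - \<alpha>\<^sup>2) * b / 4 + \<Delta> * B' / 2) * x ^ 4)
        (((\<alpha> - \<beta>) * b / 2 - (\<alpha>\<^sup>2 - \<beta>\<^sup>2) * a / 4 + \<Delta> * (\<alpha> + \<beta>) / 8) * x ^ 3)"
    by (simp add: T_def B'_def complex_eq_iff field_simps power2_eq_square power3_eq_cube power4_eq_xxxx)
  show ?thesis
    unfolding identity[symmetric] gauss_model_def
    by (simp add: algebra_simps diff_divide_distrib add_divide_distrib)
qed

lemma gauss_model_step_coeff_bounds:
  fixes \<alpha> \<beta> a b \<Delta> :: real
  assumes \<alpha>: "\<bar>\<alpha>\<bar> \<le> 1" and \<beta>: "\<bar>\<beta>\<bar> \<le> 1" and a: "\<bar>a\<bar> \<le> 1 / 4" and b: "\<bar>b\<bar> \<le> 1 / 4"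
    and \<Delta>: "0 \<le> \<Delta>" "\<Delta> \<le> 3 / 2"
  defines "B' \<equiv> \<Delta> / 4 - (\<alpha> - \<beta>) * a / 2 - (\<alpha>\<^sup>2 + \<beta>\<^sup>2) / 8"
  shows "\<bar>B'\<bar> \<le> 7 / 8"
    and "\<bar>(\<beta>\<^sup>2 - \<alpha>\<^sup>2) * b / 4 + \<Delta> * B' / 2\<bar> \<le> 1"
    and "\<bar>(\<alpha> - \<beta>) * b / 2 - (\<alpha>\<^sup>2 - \<beta>\<^sup>2) * a / 4 + \<Delta> * (\<alpha> + \<beta>) / 8\<bar> \<le> 1"
proof -
  have prod: "\<bar>y * z\<bar> \<le> Y * Z" if "\<bar>y\<bar> \<le> Y" "\<bar>z\<bar> \<le> Z" for y z Y Z :: real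
    using that by (auto simp: abs_mult intro!: mult_mono)
  have \<alpha>2: "\<bar>\<alpha>\<^sup>2\<bar> \<le> 1" and \<beta>2: "\<bar>\<beta>\<^sup>2\<bar> \<le> 1"
    using prod[OF \<alpha> \<alpha>] prod[OF \<beta> \<beta>] by (simp_all add: power2_eq_square)
  have s1: "\<bar>\<alpha> - \<beta>\<bar> \<le> 2" and s2: "\<bar>\<alpha>\<^sup>2 - \<beta>\<^sup>2\<bar> \<le> 2" and s3: "\<bar>\<alpha> + \<beta>\<bar> \<le> 2"
    and s4: "\<bar>\<beta>\<^sup>2 - \<alpha>\<^sup>2\<bar> \<le> 2" and \<Delta>': "\<bar>\<Delta>\<bar> \<le> 3 / 2"
    using \<alpha> \<beta> \<alpha>2 \<beta>2 \<Delta> by linarith+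
  have "\<bar>(\<alpha> - \<beta>) * a\<bar> \<le> 2 * (1 / 4)"
    by (rule prod[OF s1 a])
  then show B': "\<bar>B'\<bar> \<le> 7 / 8"
    using \<alpha>2 \<beta>2 \<Delta> unfolding B'_def abs_le_iff by (simp add: field_simps; linarith)
  have "\<bar>(\<beta>\<^sup>2 - \<alpha>\<^sup>2) * b\<bar> \<le> 2 * (1 / 4)" "\<bar>\<Delta> * B'\<bar> \<le> 3 / 2 * (7 / 8)"
    by (rule prod[OF s4 b], rule prod[OF \<Delta>' B'])
  then show "\<bar>(\<beta>\<^sup>2 - \<alpha>\<^sup>2) * b / 4 + \<Delta> * B' / 2\<bar> \<le> 1"
    unfolding abs_le_iff by (simp add: field_simps; linarith)
  have "\<bar>(\<alpha> - \<beta>) * b\<bar> \<le> 2 * (1 / 4)" "\<bar>(\<alpha>\<^sup>2 - \<beta>\<^sup>2) * a\<bar> \<le> 2 * (1 / 4)"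
    "\<bar>\<Delta> * (\<alpha> + \<beta>)\<bar> \<le> 3 / 2 * 2"
    by (rule prod[OF s1 b], rule prod[OF s2 a], rule prod[OF \<Delta>' s3])
  then show "\<bar>(\<alpha> - \<beta>) * b / 2 - (\<alpha>\<^sup>2 - \<beta>\<^sup>2) * a / 4 + \<Delta> * (\<alpha> + \<beta>) / 8\<bar> \<le> 1"
    unfolding abs_le_iff by (simp add: field_simps; linarith)
qed

lemma norm_cis_remainder_mult_le:
  assumes "\<bar>c\<bar> \<le> 1" "cmod P \<le> C"
  shows "cmod ((cis (c * x) - Complex (1 - (c * x)\<^sup>2 / 2) (c * x)) * P) \<le> \<bar>x\<bar> ^ 3 / 6 * C"
proof -
  have "\<bar>c * x\<bar> ^ 3 \<le> \<bar>x\<bar> ^ 3"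
    using assms(1) by (simp add: abs_mult power_mult_distrib mult_left_le_one_le power_le_one)
  then have "cmod (cis (c * x) - Complex (1 - (c * x)\<^sup>2 / 2) (c * x)) \<le> \<bar>x\<bar> ^ 3 / 6"
    using cis_approx2[of "c * x"] by linarith
  then show ?thesis
    unfolding norm_mult using assms(2) by (intro mult_mono) auto
qed

lemma exp_gauss_remainder_le:
  fixes \<Delta> x :: real
  assumes "0 \<le> \<Delta>" "\<Delta> \<le> 3 / 2" "\<bar>x\<bar> \<le> 4"
  shows "\<bar>exp (- (\<Delta> / 2) * x\<^sup>2) - (1 - \<Delta> * x\<^sup>2 / 2)\<bar> \<le> 9 / 4 * \<bar>x\<bar> ^ 3"
proof -
  have "\<bar>exp (- (\<Delta> / 2) * x\<^sup>2) - (1 - \<Delta> * x\<^sup>2 / 2)\<bar> \<le> (\<Delta> * x\<^sup>2 / 2)\<^sup>2"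
    using exp_minus_approx1[of "\<Delta> * x\<^sup>2 / 2"] assms(1) by simp
  also have "\<dots> = \<Delta>\<^sup>2 / 4 * (\<bar>x\<bar> * \<bar>x\<bar> ^ 3)"
    by (simp add: power_mult_distrib power_abs eval_nat_numeral)
  also have "\<dots> \<le> (3 / 2)\<^sup>2 / 4 * (4 * \<bar>x\<bar> ^ 3)"
    using assms by (intro mult_mono power_mono divide_right_mono mult_right_mono) auto
  finally show ?thesis
    by (simp add: power2_eq_square)
qed

lemma gauss_model_step_local:
  fixes \<alpha> \<beta> a b \<Delta> x :: real
  assumes \<alpha>: "\<bar>\<alpha>\<bar> \<le> 1" and \<beta>: "\<bar>\<beta>\<bar> \<le> 1" and a: "\<bar>a\<bar> \<le> 1 / 4" and b: "\<bar>b\<bar> \<le> 1 / 4"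
    and \<Delta>: "0 \<le> \<Delta>" "\<Delta> \<le> 3 / 2" and x: "\<bar>x\<bar> \<le> 4"
  shows "cmod ((cis (\<alpha> * x) * gauss_model 0 a b x + cis (\<beta> * x) * gauss_model 0 (- a) (- b) x) / 2
    - gauss_model \<Delta> ((\<alpha> + \<beta>) / 4) (\<Delta> / 4 - (\<alpha> - \<beta>) * a / 2 - (\<alpha>\<^sup>2 + \<beta>\<^sup>2) / 8) x)
    \<le> 50 * \<bar>x\<bar> ^ 3"
proof -
  define B' where "B' = \<Delta> / 4 - (\<alpha> - \<beta>) * a / 2 - (\<alpha>\<^sup>2 + \<beta>\<^sup>2) / 8"
  note coeff = gauss_model_step_coeff_bounds[OF \<alpha> \<beta> a b \<Delta>, folded B'_def]
  have x4: "x ^ 4 \<le> 4 * \<bar>x\<bar> ^ 3"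
    using mult_right_mono[OF x, of "\<bar>x\<bar> ^ 3"] by (simp add: power_abs eval_nat_numeral)
  have small: "\<bar>c * x ^ n\<bar> \<le> \<bar>x\<bar> ^ n" if "\<bar>c\<bar> \<le> 1" for c and n :: nat
    using mult_right_mono[OF that, of "\<bar>x\<bar> ^ n"] by (simp add: abs_mult power_abs)
  have E_poly: "cmod (Complex (((\<beta>\<^sup>2 - \<alpha>\<^sup>2) * b / 4 + \<Delta> * B' / 2) * x ^ 4)
      (((\<alpha> - \<beta>) * b / 2 - (\<alpha>\<^sup>2 - \<beta>\<^sup>2) * a / 4 + \<Delta> * (\<alpha> + \<beta>) / 8) * x ^ 3)) \<le> 5 * \<bar>x\<bar> ^ 3"
    using cmod_le[of "Complex (((\<beta>\<^sup>2 - \<alpha>\<^sup>2) * b / 4 + \<Delta> * B' / 2) * x ^ 4)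
        (((\<alpha> - \<beta>) * b / 2 - (\<alpha>\<^sup>2 - \<beta>\<^sup>2) * a / 4 + \<Delta> * (\<alpha> + \<beta>) / 8) * x ^ 3)"]
      small[OF coeff(2), of 4] small[OF coeff(3), of 3] x4
    by (simp add: power_abs)
  have "cmod (Complex (1 / 2 + B' * x\<^sup>2) ((\<alpha> + \<beta>) / 4 * x)) \<le> 1 / 2 + 16 * (7 / 8) + 4 * (1 / 2)"
    using \<alpha> \<beta> by (intro norm_Complex_half_le coeff(1) x) auto
  then have E_exp: "cmod (complex_of_real (exp (- (\<Delta> / 2) * x\<^sup>2) - (1 - \<Delta> * x\<^sup>2 / 2))
      * Complex (1 / 2 + B' * x\<^sup>2) ((\<alpha> + \<beta>) / 4 * x)) \<le> 9 / 4 * \<bar>x\<bar> ^ 3 * (33 / 2)"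
    unfolding norm_mult norm_of_real using exp_gauss_remainder_le[OF \<Delta> x] by (intro mult_mono) auto
  have P: "cmod (Complex (1 / 2 + b * x\<^sup>2) (a * x)) \<le> 11 / 2" "cmod (Complex (1 / 2 - b * x\<^sup>2) (- a * x)) \<le> 11 / 2"
    using norm_Complex_half_le[OF a b x] norm_Complex_half_le[of "- a" "1 / 4" "- b" "1 / 4" x] a b x
    by simp_all
  have combine: "cmod (I + (A + B) / 2 - Q) \<le> 50 * \<bar>x\<bar> ^ 3"
    if "cmod I \<le> 5 * \<bar>x\<bar> ^ 3" "cmod A \<le> \<bar>x\<bar> ^ 3 / 6 * (11 / 2)" "cmod B \<le> \<bar>x\<bar> ^ 3 / 6 * (11 / 2)"
      "cmod Q \<le> 9 / 4 * \<bar>x\<bar> ^ 3 * (33 / 2)" for I A B Q :: complex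
  proof -
    have "cmod (I + (A + B) / 2 - Q) \<le> cmod I + cmod A / 2 + cmod B / 2 + cmod Q"
      using norm_add_avg_diff_le[of I A B Q] by (simp add: add_divide_distrib)
    moreover have "0 \<le> \<bar>x\<bar> ^ 3" by simp
    ultimately show ?thesis
      using that by linarith
  qed
  show ?thesis
    unfolding B'_def[symmetric] gauss_model_step_decomposition[of \<alpha> x a b \<beta> \<Delta>, folded B'_def]
    by (rule combine[OF E_poly norm_cis_remainder_mult_le[OF \<alpha> P(1)] norm_cis_remainder_mult_le[OF \<beta> P(2)] E_exp])
qed

lemma gauss_model_step:
  fixes \<alpha> \<beta> a b v \<Delta> \<theta> :: real
  assumes "\<bar>\<alpha>\<bar> \<le> 1" "\<bar>\<beta>\<bar> \<le> 1" "\<bar>a\<bar> \<le> 1 / 4" "\<bar>b\<bar> \<le> 1 / 4"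
    and "0 \<le> v" "0 \<le> \<Delta>" "\<Delta> \<le> 3 / 2" "\<bar>\<theta>\<bar> \<le> 4"
  shows "cmod ((cis (\<alpha> * \<theta>) * gauss_model v a b \<theta> + cis (\<beta> * \<theta>) * gauss_model v (- a) (- b) \<theta>) / 2
    - gauss_model (v + \<Delta>) ((\<alpha> + \<beta>) / 4) (\<Delta> / 4 - (\<alpha> - \<beta>) * a / 2 - (\<alpha>\<^sup>2 + \<beta>\<^sup>2) / 8) \<theta>)
    \<le> 50 * \<bar>\<theta>\<bar> ^ 3"
proof -
  define E where "E = exp (- (v / 2) * \<theta>\<^sup>2)"
  have E: "0 \<le> E" "E \<le> 1"
    using \<open>0 \<le> v\<close> by (auto simp: E_def)
  have factor: "gauss_model v a' b' \<theta> = complex_of_real E * gauss_model 0 a' b' \<theta>" for a' b'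
    using gauss_model_add_var[of v 0 a' b' \<theta>] by (simp add: E_def)
  have "(cis (\<alpha> * \<theta>) * gauss_model v a b \<theta> + cis (\<beta> * \<theta>) * gauss_model v (- a) (- b) \<theta>) / 2
      - gauss_model (v + \<Delta>) ((\<alpha> + \<beta>) / 4) (\<Delta> / 4 - (\<alpha> - \<beta>) * a / 2 - (\<alpha>\<^sup>2 + \<beta>\<^sup>2) / 8) \<theta>
    = complex_of_real E * ((cis (\<alpha> * \<theta>) * gauss_model 0 a b \<theta> + cis (\<beta> * \<theta>) * gauss_model 0 (- a) (- b) \<theta>) / 2
      - gauss_model \<Delta> ((\<alpha> + \<beta>) / 4) (\<Delta> / 4 - (\<alpha> - \<beta>) * a / 2 - (\<alpha>\<^sup>2 + \<beta>\<^sup>2) / 8) \<theta>)"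
    unfolding factor gauss_model_add_var[of v \<Delta>] E_def[symmetric] by (simp add: algebra_simps)
  also have "cmod \<dots> \<le> 1 * (50 * \<bar>\<theta>\<bar> ^ 3)"
    unfolding norm_mult norm_of_real using E gauss_model_step_local[OF assms(1-4,6-8)]
    by (intro mult_mono) auto
  finally show ?thesis by simp
qed

section \<open>Propagation of the approximation error\<close>

(* The coefficients are forced: with them gauss_model_step maps the models of the
   parent to the model of the child in each of the four cases of the recursion for char_sum. *)
definition model_lin :: "nat \<Rightarrow> real" where
  "model_lin s = (if even s then 0 else 1 / 4)"

definition model_quad :: "nat \<Rightarrow> real" where
  "model_quad s = (if even s then of_bool (odd (s div 2)) / 4
     else (vv s - vv (s div 2)) / 4 - (1 + of_bool (odd (s div 2))) / 8)"

definition char_model :: "nat \<Rightarrow> nat \<Rightarrow> real \<Rightarrow> complex" where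
  "char_model s e \<theta> = (if e = 0 then gauss_model (vv s) (model_lin s) (model_quad s) \<theta>
     else gauss_model (vv s) (- model_lin s) (- model_quad s) \<theta>)"

definition approx_err :: "nat \<Rightarrow> nat \<Rightarrow> nat \<Rightarrow> real \<Rightarrow> real" where
  "approx_err K s e \<theta> = cmod (char_sum K s e \<theta> - char_model s e \<theta>)"

definition local_err :: "real \<Rightarrow> real" where
  "local_err \<theta> = 50 * \<bar>\<theta>\<bar> ^ 3"

lemma local_err_nonneg: "0 \<le> local_err \<theta>"
  by (simp add: local_err_def)

lemma abs_model_lin_le: "\<bar>model_lin s\<bar> \<le> 1 / 4"
  by (simp add: model_lin_def)

lemma abs_model_quad_le: "\<bar>model_quad s\<bar> \<le> 1 / 4"
proof (cases "even s")
  case False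
  then obtain u where s: "s = 2 * u + 1" by (rule oddE)
  then have "model_quad s = (vv (2 * u + 1) - vv u) / 4 - (1 + of_bool (odd u)) / 8"
    by (simp add: model_quad_def)
  then show ?thesis
    using vv_odd_increment(1,2)[of u] by (cases "odd u") (auto simp: abs_le_iff field_simps)
qed (simp add: model_quad_def)

lemma char_model_add: "char_model s 0 \<theta> + char_model s 1 \<theta> = complex_of_real (exp (- (vv s / 2) * \<theta>\<^sup>2))"
  by (simp add: char_model_def gauss_model_add_neg)

lemma char_model_zero: "char_model 0 e \<theta> = 1 / 2"
  by (simp add: char_model_def gauss_model_def model_lin_def model_quad_def complex_eq_iff)

lemma norm_char_model_le:
  assumes "\<bar>\<theta>\<bar> \<le> 4"
  shows "cmod (char_model s e \<theta>) \<le> 6"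
proof -
  have "cmod (gauss_model (vv s) a b \<theta>) \<le> 1 * 6" if "\<bar>a\<bar> \<le> 1 / 4" "\<bar>b\<bar> \<le> 1 / 4" for a b
    unfolding gauss_model_def norm_mult norm_of_real
    using vv_nonneg[of s] norm_Complex_half_le[OF that assms] by (intro mult_mono) auto
  then show ?thesis
    using abs_model_lin_le[of s] abs_model_quad_le[of s] by (simp add: char_model_def)
qed

lemma approx_err_Suc_le:
  assumes "char_sum (Suc K) s e \<theta> = (cis (\<alpha> * \<theta>) * char_sum K p 0 \<theta> + cis (\<beta> * \<theta>) * char_sum K p 1 \<theta>) / 2"
    and "cmod ((cis (\<alpha> * \<theta>) * char_model p 0 \<theta> + cis (\<beta> * \<theta>) * char_model p 1 \<theta>) / 2 - char_model s e \<theta>) \<le> l"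
  shows "approx_err (Suc K) s e \<theta> \<le> (approx_err K p 0 \<theta> + approx_err K p 1 \<theta>) / 2 + l"
proof -
  let ?d0 = "char_sum K p 0 \<theta> - char_model p 0 \<theta>" and ?d1 = "char_sum K p 1 \<theta> - char_model p 1 \<theta>"
  have "char_sum (Suc K) s e \<theta> - char_model s e \<theta> = (cis (\<alpha> * \<theta>) * ?d0 + cis (\<beta> * \<theta>) * ?d1) / 2
      + ((cis (\<alpha> * \<theta>) * char_model p 0 \<theta> + cis (\<beta> * \<theta>) * char_model p 1 \<theta>) / 2 - char_model s e \<theta>)"
    unfolding assms(1) by (simp add: algebra_simps diff_divide_distrib add_divide_distrib)
  also have "cmod \<dots> \<le> cmod ((cis (\<alpha> * \<theta>) * ?d0 + cis (\<beta> * \<theta>) * ?d1) / 2) + l"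
    using norm_triangle_ineq assms(2) by (rule order_trans[OF _ add_left_mono])
  also have "cmod ((cis (\<alpha> * \<theta>) * ?d0 + cis (\<beta> * \<theta>) * ?d1) / 2) \<le> (cmod ?d0 + cmod ?d1) / 2"
    using norm_triangle_ineq[of "cis (\<alpha> * \<theta>) * ?d0" "cis (\<beta> * \<theta>) * ?d1"]
    by (simp add: norm_mult norm_divide)
  finally show ?thesis
    by (simp add: approx_err_def)
qed

lemma approx_err_Suc_le_exact:
  assumes "char_sum (Suc K) s e \<theta> = (char_sum K p 0 \<theta> + char_sum K p 1 \<theta>) / 2"
    and "char_model s e \<theta> = gauss_model (vv p) 0 0 \<theta>"
  shows "approx_err (Suc K) s e \<theta> \<le> (approx_err K p 0 \<theta> + approx_err K p 1 \<theta>) / 2"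
proof -
  have "gauss_model (vv p) 0 0 \<theta> = (char_model p 0 \<theta> + char_model p 1 \<theta>) / 2"
    unfolding char_model_add by (simp add: gauss_model_def complex_eq_iff)
  then show ?thesis
    using approx_err_Suc_le[where \<alpha> = 0 and \<beta> = 0 and l = 0] assms by simp
qed

lemma approx_err_Suc_le_step:
  assumes "char_sum (Suc K) s e \<theta> = (cis (\<alpha> * \<theta>) * char_sum K p 0 \<theta> + cis (\<beta> * \<theta>) * char_sum K p 1 \<theta>) / 2"
    and "\<bar>\<alpha>\<bar> \<le> 1" "\<bar>\<beta>\<bar> \<le> 1" "0 \<le> \<Delta>" "\<Delta> \<le> 3 / 2" "\<bar>\<theta>\<bar> \<le> 4"
    and "char_model s e \<theta> = gauss_model (vv p + \<Delta>) ((\<alpha> + \<beta>) / 4)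
      (\<Delta> / 4 - (\<alpha> - \<beta>) * model_lin p / 2 - (\<alpha>\<^sup>2 + \<beta>\<^sup>2) / 8) \<theta>"
  shows "approx_err (Suc K) s e \<theta> \<le> (approx_err K p 0 \<theta> + approx_err K p 1 \<theta>) / 2 + local_err \<theta>"
  using assms(1) unfolding local_err_def
proof (rule approx_err_Suc_le)
  show "cmod ((cis (\<alpha> * \<theta>) * char_model p 0 \<theta> + cis (\<beta> * \<theta>) * char_model p 1 \<theta>) / 2 - char_model s e \<theta>)
    \<le> 50 * \<bar>\<theta>\<bar> ^ 3"
    unfolding assms(7)
    using gauss_model_step[OF assms(2,3) abs_model_lin_le abs_model_quad_le vv_nonneg assms(4-6)]
    by (simp add: char_model_def)
qed

lemma approx_err_even_exact:
  assumes "even u" "e < 2"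
  shows "approx_err (Suc K) (2 * u) e \<theta> \<le> (approx_err K u 0 \<theta> + approx_err K u 1 \<theta>) / 2"
  using assms char_sum_even_1[of K u \<theta>]
  by (intro approx_err_Suc_le_exact; cases e)
    (simp_all add: char_sum_even_0 char_model_def model_lin_def model_quad_def vv_even)

lemma approx_err_even:
  assumes "e < 2" "\<bar>\<theta>\<bar> \<le> 4"
  shows "approx_err (Suc K) (2 * u) e \<theta> \<le> (approx_err K u 0 \<theta> + approx_err K u 1 \<theta>) / 2 + local_err \<theta>"
proof (cases "even u")
  case True
  then show ?thesis
    using approx_err_even_exact[OF True assms(1), of K \<theta>] local_err_nonneg[of \<theta>] by linarith
next
  case False
  have "approx_err (Suc K) (2 * u) 0 \<theta> \<le> (approx_err K u 0 \<theta> + approx_err K u 1 \<theta>) / 2 + local_err \<theta>"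
    by (rule approx_err_Suc_le_step[where \<alpha> = 0 and \<beta> = 0 and \<Delta> = 1])
      (use False assms in \<open>simp_all add: char_sum_even_0 char_model_def model_lin_def model_quad_def vv_even\<close>)
  moreover have "approx_err (Suc K) (2 * u) 1 \<theta> \<le> (approx_err K u 0 \<theta> + approx_err K u 1 \<theta>) / 2 + local_err \<theta>"
    by (rule approx_err_Suc_le_step[where \<alpha> = 1 and \<beta> = "- 1" and \<Delta> = 1])
      (use False assms char_sum_even_1[of K u \<theta>] in \<open>simp_all add: char_model_def model_lin_def model_quad_def vv_even\<close>)
  ultimately show ?thesis
    using assms(1) by (cases e) auto
qed

lemma approx_err_odd_0:
  assumes "\<bar>\<theta>\<bar> \<le> 4"
  shows "approx_err (Suc K) (2 * u + 1) 0 \<theta> \<le> (approx_err K u 0 \<theta> + approx_err K u 1 \<theta>) / 2 + local_err \<theta>"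
  using vv_odd_increment(1,2)[of u] assms char_sum_odd_0[of K u \<theta>]
  by (intro approx_err_Suc_le_step[where \<alpha> = "of_bool (odd u)" and \<beta> = "of_bool (even u)"
        and \<Delta> = "vv (2 * u + 1) - vv u"])
    (auto simp: char_model_def model_lin_def model_quad_def)

lemma approx_err_odd_1:
  assumes "\<bar>\<theta>\<bar> \<le> 4"
  shows "approx_err (Suc K) (2 * u + 1) 1 \<theta>
    \<le> (approx_err K (u + 1) 0 \<theta> + approx_err K (u + 1) 1 \<theta>) / 2 + local_err \<theta>"
proof (rule approx_err_Suc_le_step[where \<alpha> = 0 and \<beta> = "- 1" and \<Delta> = "vv (2 * u + 1) - vv (u + 1)"])
  have "- model_quad (2 * u + 1)
      = (vv (2 * u + 1) - vv (u + 1)) / 4 - (0 - - 1) * model_lin (u + 1) / 2 - (0\<^sup>2 + (- 1)\<^sup>2) / 8"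
    using vv_odd[of u] by (cases "odd u") (auto simp: model_quad_def model_lin_def field_simps)
  then show "char_model (2 * u + 1) 1 \<theta> = gauss_model (vv (u + 1) + (vv (2 * u + 1) - vv (u + 1))) ((0 + - 1) / 4)
      ((vv (2 * u + 1) - vv (u + 1)) / 4 - (0 - - 1) * model_lin (u + 1) / 2 - (0\<^sup>2 + (- 1)\<^sup>2) / 8) \<theta>"
    by (simp add: char_model_def model_lin_def)
qed (use vv_odd_increment(3,4)[of u] assms char_sum_odd_1[of K u \<theta>] in simp_all)

(* A weighted maximum of the four errors at s and s + 1.  One step of the recursion averages
   the two errors of a parent and adds local_err; the weights absorb this increase unless the
   new binary digit differs from the last one (err_potential_Suc_le). *)
definition err_potential :: "nat \<Rightarrow> nat \<Rightarrow> real \<Rightarrow> real" where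
  "err_potential K s \<theta> = (if even s
     then max (max (approx_err K s 0 \<theta>) (approx_err K s 1 \<theta>) + 3 * local_err \<theta>)
        (max (approx_err K (s + 1) 0 \<theta> + 2 * local_err \<theta>) (approx_err K (s + 1) 1 \<theta>))
     else max (max (approx_err K (s + 1) 0 \<theta>) (approx_err K (s + 1) 1 \<theta>) + 3 * local_err \<theta>)
        (max (approx_err K s 1 \<theta> + 2 * local_err \<theta>) (approx_err K s 0 \<theta>)))"

lemma err_potential_even_le_iff:
  assumes "even s"
  shows "err_potential K s \<theta> \<le> M \<longleftrightarrow>
    approx_err K s 0 \<theta> + 3 * local_err \<theta> \<le> M \<and> approx_err K s 1 \<theta> + 3 * local_err \<theta> \<le> M \<and>
    approx_err K (s + 1) 0 \<theta> + 2 * local_err \<theta> \<le> M \<and> approx_err K (s + 1) 1 \<theta> \<le> M"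
  using assms by (auto simp: err_potential_def)

lemma err_potential_odd_le_iff:
  assumes "odd s"
  shows "err_potential K s \<theta> \<le> M \<longleftrightarrow>
    approx_err K (s + 1) 0 \<theta> + 3 * local_err \<theta> \<le> M \<and> approx_err K (s + 1) 1 \<theta> + 3 * local_err \<theta> \<le> M \<and>
    approx_err K s 1 \<theta> + 2 * local_err \<theta> \<le> M \<and> approx_err K s 0 \<theta> \<le> M"
  using assms by (auto simp: err_potential_def)

lemma err_potential_double_le:
  assumes "\<bar>\<theta>\<bar> \<le> 4"
  shows "err_potential (Suc K) (2 * s) \<theta> \<le> err_potential K s \<theta> + of_bool (odd s) * (4 * local_err \<theta>)"
proof -
  define l where "l = local_err \<theta>"
  define P where "P = err_potential K s \<theta>"
  define E where "E j e = approx_err K (s + j) e \<theta> / 2" for j e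
  have l: "0 \<le> l" by (simp add: l_def local_err_nonneg)
  have child: "approx_err (Suc K) (2 * s) e \<theta> \<le> E 0 0 + E 0 1 + of_bool (odd s) * l" if "e < 2" for e
    using approx_err_even[OF that assms, of K s] approx_err_even_exact[OF _ that, of s K \<theta>]
    by (cases "even s") (simp_all add: E_def l_def add_divide_distrib)
  have child': "approx_err (Suc K) (2 * s + 1) 0 \<theta> \<le> E 0 0 + E 0 1 + l"
    "approx_err (Suc K) (2 * s + 1) 1 \<theta> \<le> E 1 0 + E 1 1 + l"
    using approx_err_odd_0[OF assms, of K s] approx_err_odd_1[OF assms, of K s]
    by (simp_all add: E_def l_def add_divide_distrib)
  have "err_potential (Suc K) (2 * s) \<theta> \<le> P + of_bool (odd s) * (4 * l)"
  proof (cases "even s")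
    case True
    then have "2 * E 0 0 + 3 * l \<le> P" "2 * E 0 1 + 3 * l \<le> P" "2 * E 1 0 + 2 * l \<le> P" "2 * E 1 1 \<le> P"
      using err_potential_even_le_iff[OF True, of K \<theta> P] by (simp_all add: E_def P_def l_def)
    moreover have "approx_err (Suc K) (2 * s) 0 \<theta> \<le> E 0 0 + E 0 1"
      "approx_err (Suc K) (2 * s) 1 \<theta> \<le> E 0 0 + E 0 1"
      using child[of 0] child[of 1] True by simp_all
    ultimately have "err_potential (Suc K) (2 * s) \<theta> \<le> P"
      unfolding err_potential_even_le_iff[of "2 * s", OF dvd_triv_left] l_def[symmetric]
      using child' l by - (intro conjI; linarith)
    with True show ?thesis by simp
  next
    case False
    then have "2 * E 1 0 + 3 * l \<le> P" "2 * E 1 1 + 3 * l \<le> P" "2 * E 0 1 + 2 * l \<le> P" "2 * E 0 0 \<le> P"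
      using err_potential_odd_le_iff[of s K \<theta> P] by (simp_all add: E_def P_def l_def)
    moreover have "approx_err (Suc K) (2 * s) 0 \<theta> \<le> E 0 0 + E 0 1 + l"
      "approx_err (Suc K) (2 * s) 1 \<theta> \<le> E 0 0 + E 0 1 + l"
      using child[of 0] child[of 1] False by simp_all
    ultimately have "err_potential (Suc K) (2 * s) \<theta> \<le> P + 4 * l"
      unfolding err_potential_even_le_iff[of "2 * s", OF dvd_triv_left] l_def[symmetric]
      using child' l by - (intro conjI; linarith)
    with False show ?thesis by simp
  qed
  then show ?thesis
    by (simp add: P_def l_def)
qed

lemma err_potential_double_add1_le:
  assumes "\<bar>\<theta>\<bar> \<le> 4"
  shows "err_potential (Suc K) (2 * s + 1) \<theta> \<le> err_potential K s \<theta> + of_bool (even s) * (4 * local_err \<theta>)"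
proof -
  define l where "l = local_err \<theta>"
  define P where "P = err_potential K s \<theta>"
  define E where "E j e = approx_err K (s + j) e \<theta> / 2" for j e
  have odd: "odd (2 * s + 1)" by simp
  have l: "0 \<le> l" by (simp add: l_def local_err_nonneg)
  have "2 * (s + 1) = 2 * s + 1 + 1" by simp
  then have child: "approx_err (Suc K) (2 * s + 1 + 1) e \<theta> \<le> E 1 0 + E 1 1 + of_bool (even s) * l"
    if "e < 2" for e
    using approx_err_even[OF that assms, of K "s + 1"] approx_err_even_exact[OF _ that, of "s + 1" K \<theta>]
    by (cases "even s") (simp_all add: E_def l_def add_divide_distrib)
  have child': "approx_err (Suc K) (2 * s + 1) 0 \<theta> \<le> E 0 0 + E 0 1 + l"
    "approx_err (Suc K) (2 * s + 1) 1 \<theta> \<le> E 1 0 + E 1 1 + l"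
    using approx_err_odd_0[OF assms, of K s] approx_err_odd_1[OF assms, of K s]
    by (simp_all add: E_def l_def add_divide_distrib)
  have "err_potential (Suc K) (2 * s + 1) \<theta> \<le> P + of_bool (even s) * (4 * l)"
  proof (cases "even s")
    case True
    then have "2 * E 0 0 + 3 * l \<le> P" "2 * E 0 1 + 3 * l \<le> P" "2 * E 1 0 + 2 * l \<le> P" "2 * E 1 1 \<le> P"
      using err_potential_even_le_iff[OF True, of K \<theta> P] by (simp_all add: E_def P_def l_def)
    moreover have "approx_err (Suc K) (2 * s + 1 + 1) 0 \<theta> \<le> E 1 0 + E 1 1 + l"
      "approx_err (Suc K) (2 * s + 1 + 1) 1 \<theta> \<le> E 1 0 + E 1 1 + l"
      using child[of 0] child[of 1] True by simp_all
    ultimately have "err_potential (Suc K) (2 * s + 1) \<theta> \<le> P + 4 * l"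
      unfolding err_potential_odd_le_iff[OF odd] l_def[symmetric]
      using child' l by - (intro conjI; linarith)
    with True show ?thesis by simp
  next
    case False
    then have "2 * E 1 0 + 3 * l \<le> P" "2 * E 1 1 + 3 * l \<le> P" "2 * E 0 1 + 2 * l \<le> P" "2 * E 0 0 \<le> P"
      using err_potential_odd_le_iff[of s K \<theta> P] by (simp_all add: E_def P_def l_def)
    moreover have "approx_err (Suc K) (2 * s + 1 + 1) 0 \<theta> \<le> E 1 0 + E 1 1"
      "approx_err (Suc K) (2 * s + 1 + 1) 1 \<theta> \<le> E 1 0 + E 1 1"
      using child[of 0] child[of 1] False by simp_all
    ultimately have "err_potential (Suc K) (2 * s + 1) \<theta> \<le> P"
      unfolding err_potential_odd_le_iff[OF odd] l_def[symmetric]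
      using child' l by - (intro conjI; linarith)
    with False show ?thesis by simp
  qed
  then show ?thesis
    by (simp add: P_def l_def)
qed

lemma err_potential_Suc_le:
  assumes "b < 2" "\<bar>\<theta>\<bar> \<le> 4"
  shows "err_potential (Suc K) (2 * s + b) \<theta> \<le> err_potential K s \<theta> + of_bool (b \<noteq> s mod 2) * (4 * local_err \<theta>)"
  using assms err_potential_double_le[OF assms(2), of K s] err_potential_double_add1_le[OF assms(2), of K s]
  by (cases "even s"; cases b) (auto simp: even_iff_mod_2_eq_zero)

lemma approx_err_zero: "e < 2 \<Longrightarrow> approx_err (Suc K) 0 e \<theta> = 0"
  by (simp add: approx_err_def char_sum_zero char_model_zero)

lemma approx_err_one_0:
  assumes "\<bar>\<theta>\<bar> \<le> 4"
  shows "approx_err (Suc (Suc K)) 1 0 \<theta> \<le> local_err \<theta>"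
  using approx_err_odd_0[OF assms, of "Suc K" 0] by (simp add: approx_err_zero)

lemma approx_err_one_1:
  assumes "\<bar>\<theta>\<bar> \<le> 4"
  shows "approx_err (Suc (Suc K)) 1 1 \<theta> \<le> 3 * local_err \<theta> + 28 / 2 ^ Suc (Suc K)"
proof (induction K)
  case 0
  have "approx_err 2 1 1 \<theta> \<le> cmod (char_sum 2 1 1 \<theta>) + cmod (char_model 1 1 \<theta>)"
    unfolding approx_err_def by (rule norm_triangle_ineq4)
  also have "\<dots> \<le> 1 + 6"
    using norm_char_sum_le norm_char_model_le[OF assms] by (rule add_mono)
  finally show ?case
    using local_err_nonneg[of \<theta>] by (simp add: numeral_2_eq_2)
next
  case (Suc K)
  have "approx_err (Suc (Suc (Suc K))) 1 1 \<theta>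
      \<le> (approx_err (Suc (Suc K)) 1 0 \<theta> + approx_err (Suc (Suc K)) 1 1 \<theta>) / 2 + local_err \<theta>"
    using approx_err_odd_1[OF assms, of "Suc (Suc K)" 0] by simp
  also have "\<dots> \<le> (local_err \<theta> + (3 * local_err \<theta> + 28 / 2 ^ Suc (Suc K))) / 2 + local_err \<theta>"
    using approx_err_one_0[OF assms, of K] Suc.IH by (intro add_mono divide_right_mono) auto
  also have "\<dots> = 3 * local_err \<theta> + 28 / 2 ^ Suc (Suc (Suc K))"
    by (simp add: field_simps)
  finally show ?case .
qed

lemma err_potential_zero:
  assumes "\<bar>\<theta>\<bar> \<le> 4"
  shows "err_potential (Suc (Suc K)) 0 \<theta> \<le> 3 * local_err \<theta> + 28 / 2 ^ Suc (Suc K)"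
  using approx_err_zero[of 0 "Suc K" \<theta>] approx_err_zero[of 1 "Suc K" \<theta>] approx_err_one_0[OF assms, of K]
    approx_err_one_1[OF assms, of K] local_err_nonneg[of \<theta>]
  by (simp add: err_potential_even_le_iff add_increasing2)

lemma err_potential_le_bit_changes:
  assumes "\<bar>\<theta>\<bar> \<le> 4" "t < 2 ^ m"
  shows "err_potential (Suc (Suc J) + m) t \<theta>
    \<le> 3 * local_err \<theta> + 28 / 2 ^ Suc (Suc J) + 4 * local_err \<theta> * bit_changes t"
  using assms(2)
proof (induction m arbitrary: t)
  case 0
  then show ?case
    using err_potential_zero[OF assms(1), of J] by (simp add: bit_changes.simps)
next
  case (Suc m)
  define s b where "s = t div 2" and "b = t mod 2"
  have t: "t = 2 * s + b" and b: "b < 2" and "s < 2 ^ m"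
    using Suc.prems by (auto simp: s_def b_def)
  then have "err_potential (Suc (Suc J) + Suc m) t \<theta>
      \<le> 3 * local_err \<theta> + 28 / 2 ^ Suc (Suc J) + 4 * local_err \<theta> * bit_changes s
        + of_bool (b \<noteq> s mod 2) * (4 * local_err \<theta>)"
    using err_potential_Suc_le[OF b assms(1), of "Suc (Suc J) + m" s] Suc.IH[of s] by simp
  also have "\<dots> = 3 * local_err \<theta> + 28 / 2 ^ Suc (Suc J) + 4 * local_err \<theta> * bit_changes t"
    unfolding t bit_changes_double_add[OF b] by (simp add: algebra_simps)
  finally show ?case .
qed

lemma norm_char_sum_add_sub_le:
  "cmod (char_sum K t 0 \<theta> + char_sum K t 1 \<theta> - complex_of_real (exp (- (vv t / 2) * \<theta>\<^sup>2)))
    \<le> 2 * err_potential K t \<theta>"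
proof -
  have le: "approx_err K t e \<theta> \<le> err_potential K t \<theta>" if "e < 2" for e
    using that local_err_nonneg[of \<theta>] err_potential_even_le_iff[of t K \<theta> "err_potential K t \<theta>"]
      err_potential_odd_le_iff[of t K \<theta> "err_potential K t \<theta>"]
    by (cases "even t"; cases e) auto
  have "cmod (char_sum K t 0 \<theta> + char_sum K t 1 \<theta> - complex_of_real (exp (- (vv t / 2) * \<theta>\<^sup>2)))
      \<le> approx_err K t 0 \<theta> + approx_err K t 1 \<theta>"
    unfolding approx_err_def char_model_add[symmetric]
    using norm_triangle_ineq[of "char_sum K t 0 \<theta> - char_model t 0 \<theta>" "char_sum K t 1 \<theta> - char_model t 1 \<theta>"]
    by (simp add: algebra_simps)
  with le[of 0] le[of 1] show ?thesis
    by simp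
qed

section \<open>Densities\<close>

(* On these residues dd t is periodic modulo 2 ^ Suc k (dd_mod_eq). *)
definition no_high_carry :: "nat \<Rightarrow> nat \<Rightarrow> nat \<Rightarrow> bool" where
  "no_high_carry k t s \<longleftrightarrow> s + t < 2 ^ Suc k \<and> (s < 2 ^ k \<longleftrightarrow> s + t < 2 ^ k)"

definition good_residues :: "nat \<Rightarrow> nat \<Rightarrow> int \<Rightarrow> nat set" where
  "good_residues k t d = {s. no_high_carry k t s \<and> dd t s = d}"

definition bad_residues :: "nat \<Rightarrow> nat \<Rightarrow> nat set" where
  "bad_residues k t = {s. s < 2 ^ Suc k \<and> \<not> no_high_carry k t s}"

definition count_dd :: "nat \<Rightarrow> nat \<Rightarrow> int \<Rightarrow> nat" where
  "count_dd t M d = card {n. n < M \<and> dd t n = d}"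

lemma dd_mod_eq:
  assumes "no_high_carry k t (n mod 2 ^ Suc k)"
  shows "dd t n = dd t (n mod 2 ^ Suc k)"
proof -
  have "dd t n = dd t (2 ^ Suc k * (n div 2 ^ Suc k) + n mod 2 ^ Suc k)"
    by simp
  also have "\<dots> = dd t (n mod 2 ^ Suc k)"
    using assms unfolding no_high_carry_def by (intro dd_periodic) auto
  finally show ?thesis .
qed

lemma good_residues_subset: "good_residues k t d \<subseteq> {..<2 ^ Suc k}"
  by (auto simp: good_residues_def no_high_carry_def)

lemma finite_no_high_carry: "finite {s. no_high_carry k t s}"
  by (rule finite_subset[of _ "{..<2 ^ Suc k}"]) (auto simp: no_high_carry_def)

lemma finite_good_residues: "finite (good_residues k t d)"
  using good_residues_subset by (rule finite_subset) simp

lemma finite_bad_residues: "finite (bad_residues k t)"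
  by (simp add: bad_residues_def)

lemma good_bad_residues_disjoint: "good_residues k t d \<inter> bad_residues k t = {}"
  by (auto simp: good_residues_def bad_residues_def)

lemma card_bad_residues_le: "card (bad_residues k t) \<le> 2 * t"
proof -
  have "bad_residues k t \<subseteq> {2 ^ k - t..<2 ^ k} \<union> {2 ^ Suc k - t..<2 ^ Suc k}"
    by (auto simp: bad_residues_def no_high_carry_def)
  then have "card (bad_residues k t) \<le> card ({2 ^ k - t..<2 ^ k} \<union> {2 ^ Suc k - t..<(2::nat) ^ Suc k})"
    by (intro card_mono) auto
  also have "\<dots> \<le> t + t"
    using card_Un_le[of "{2 ^ k - t..<(2::nat) ^ k}" "{2 ^ Suc k - t..<(2::nat) ^ Suc k}"] by simp
  finally show ?thesis by simp
qed

lemma card_good_bad_residues_le: "card (good_residues k t d) + card (bad_residues k t) \<le> 2 ^ Suc k"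
proof -
  have "card (good_residues k t d) + card (bad_residues k t) = card (good_residues k t d \<union> bad_residues k t)"
    by (rule card_Un_disjoint[OF finite_good_residues finite_bad_residues good_bad_residues_disjoint, symmetric])
  also have "\<dots> \<le> card {..<(2::nat) ^ Suc k}"
    using good_residues_subset[of k t d] by (intro card_mono) (auto simp: bad_residues_def)
  finally show ?thesis by simp
qed

lemma count_dd_bounds:
  fixes M k :: nat
  defines "p \<equiv> 2 ^ Suc k :: nat"
  shows "M div p * card (good_residues k t d) \<le> count_dd t M d"
    and "count_dd t M d \<le> (M div p + 1) * (card (good_residues k t d) + card (bad_residues k t))"
proof -
  have "M div p * card (good_residues k t d) = card {n. n < M div p * p \<and> n mod p \<in> good_residues k t d}"
    using good_residues_subset by (simp add: card_less_mult_mod_in p_def)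
  also have "\<dots> \<le> count_dd t M d"
    unfolding count_dd_def
  proof (intro card_mono subsetI)
    fix n assume n: "n \<in> {n. n < M div p * p \<and> n mod p \<in> good_residues k t d}"
    then have "n < M"
      using less_le_trans[OF _ div_times_less_eq_dividend[of M p]] by simp
    moreover have "dd t n = d"
      using n dd_mod_eq[of k t n] by (simp add: good_residues_def p_def)
    ultimately show "n \<in> {n. n < M \<and> dd t n = d}" by simp
  qed simp
  finally show "M div p * card (good_residues k t d) \<le> count_dd t M d" .
  have "M < (M div p + 1) * p"
    using dividend_less_div_times[of p M] by (simp add: p_def)
  then have "count_dd t M d \<le> card {n. n < (M div p + 1) * p \<and> n mod p \<in> good_residues k t d \<union> bad_residues k t}"
    unfolding count_dd_def
  proof (intro card_mono subsetI)
    fix n assume n: "n \<in> {n. n < M \<and> dd t n = d}"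
    have "n mod p \<in> good_residues k t d" if "no_high_carry k t (n mod p)"
      using n dd_mod_eq[of k t n] that by (simp add: good_residues_def p_def)
    moreover have "n mod p < p" by (simp add: p_def)
    ultimately show "n \<in> {n. n < (M div p + 1) * p \<and> n mod p \<in> good_residues k t d \<union> bad_residues k t}"
      using n \<open>M < (M div p + 1) * p\<close> by (auto simp: bad_residues_def p_def)
  qed simp
  also have "\<dots> = (M div p + 1) * card (good_residues k t d \<union> bad_residues k t)"
    using good_residues_subset by (intro card_less_mult_mod_in) (auto simp: p_def bad_residues_def)
  also have "card (good_residues k t d \<union> bad_residues k t) = card (good_residues k t d) + card (bad_residues k t)"
    by (rule card_Un_disjoint[OF finite_good_residues finite_bad_residues good_bad_residues_disjoint])
  finally show "count_dd t M d \<le> (M div p + 1) * (card (good_residues k t d) + card (bad_residues k t))" .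
qed

lemma count_dd_ratio_bounds:
  fixes M k :: nat
  assumes "0 < M"
  defines "p \<equiv> 2 ^ Suc k :: real"
  shows "card (good_residues k t d) / p - p / M \<le> count_dd t M d / M"
    and "count_dd t M d / M \<le> (card (good_residues k t d) + card (bad_residues k t)) / p + p / M"
proof -
  define x where "x = real (M div 2 ^ Suc k)"
  define c where "c = real (card (good_residues k t d))"
  define b where "b = real (card (bad_residues k t))"
  define D where "D = real (count_dd t M d)"
  have p: "0 < p" by (simp add: p_def)
  have M: "0 < real M" using assms by simp
  have xp: "x * p \<le> M" "M \<le> (x + 1) * p"
    using of_nat_mono[OF div_times_less_eq_dividend[of M "2 ^ Suc k"], where 'a = real]
      of_nat_mono[OF less_imp_le[OF dividend_less_div_times[of "2 ^ Suc k" M]], where 'a = real]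
    by (simp_all add: x_def p_def algebra_simps)
  have xc: "x * c \<le> D" and xcb: "D \<le> (x + 1) * (c + b)"
    using of_nat_mono[OF count_dd_bounds(1)[where M = M and k = k and t = t and d = d], where 'a = real]
      of_nat_mono[OF count_dd_bounds(2)[where M = M and k = k and t = t and d = d], where 'a = real]
    by (simp_all add: x_def c_def b_def D_def algebra_simps)
  have cb: "0 \<le> c" "0 \<le> b" "c + b \<le> p"
    using of_nat_mono[OF card_good_bad_residues_le[of k t d], where 'a = real]
    by (simp_all add: c_def b_def p_def)
  have "(M / p - 1) * c \<le> x * c"
    using xp p cb by (intro mult_right_mono) (simp_all add: divide_le_eq algebra_simps)
  then have "M * c / p - p \<le> D"
    using xc cb by (simp add: algebra_simps)
  then have "(M * c / p - p) / M \<le> D / M"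
    using M by (simp add: divide_right_mono)
  moreover have "(M * c / p - p) / M = c / p - p / M"
    using M p by (simp add: field_simps)
  ultimately show "card (good_residues k t d) / p - p / M \<le> count_dd t M d / M"
    by (simp add: c_def D_def)
  have "(x + 1) * (c + b) \<le> (M / p + 1) * (c + b)"
    using xp p cb by (intro mult_right_mono) (simp_all add: le_divide_eq)
  then have "D \<le> M * (c + b) / p + p"
    using xcb cb by (simp add: algebra_simps)
  then have "D / M \<le> (M * (c + b) / p + p) / M"
    using M by (simp add: divide_right_mono)
  moreover have "(M * (c + b) / p + p) / M = (c + b) / p + p / M"
    using M p by (simp add: field_simps)
  ultimately show "count_dd t M d / M \<le> (card (good_residues k t d) + card (bad_residues k t)) / p + p / M"
    by (simp add: c_def b_def D_def)
qed

lemma convergent_count_dd: "convergent (\<lambda>M. count_dd t M d / M)"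
proof (rule convergent_if_eventually_close)
  fix e :: real assume e: "0 < e"
  have "(\<lambda>k. real t / 2 ^ k) \<longlonglongrightarrow> 0"
    by (rule LIMSEQ_divide_realpow_zero) simp
  then have "\<forall>\<^sub>F k in sequentially. real t / 2 ^ k < e / 3"
    using e by (intro order_tendstoD(2)) auto
  then obtain k where k: "real t / 2 ^ k < e / 3"
    by (auto simp: eventually_sequentially)
  define p :: real where "p = 2 ^ Suc k"
  define c where "c = card (good_residues k t d) / p - e / 3"
  have bad: "card (bad_residues k t) / p \<le> real t / 2 ^ k"
    using of_nat_mono[OF card_bad_residues_le[of k t], where 'a = real] by (simp add: p_def field_simps)
  have "(\<lambda>M. p / real M) \<longlonglongrightarrow> 0"
    by (rule lim_const_over_n)
  then have "\<forall>\<^sub>F M in sequentially. p / real M < e / 3 \<and> 0 < M"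
    using e by (intro eventually_conj order_tendstoD(2) eventually_gt_at_top) auto
  then have "\<forall>\<^sub>F M in sequentially. c \<le> count_dd t M d / M \<and> count_dd t M d / M \<le> c + e"
  proof (rule eventually_mono)
    fix M :: nat assume M: "p / real M < e / 3 \<and> 0 < M"
    then have "card (good_residues k t d) / p - p / M \<le> count_dd t M d / M"
      "count_dd t M d / M \<le> card (good_residues k t d) / p + card (bad_residues k t) / p + p / M"
      using count_dd_ratio_bounds[where k = k and t = t and d = d] unfolding p_def
      by (simp_all add: add_divide_distrib)
    then show "c \<le> count_dd t M d / M \<and> count_dd t M d / M \<le> c + e"
      using M bad k unfolding c_def by (intro conjI; linarith)
  qed
  then show "\<exists>c. \<forall>\<^sub>F M in sequentially. c \<le> count_dd t M d / M \<and> count_dd t M d / M \<le> c + e"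
    by blast
qed

lemma LIMSEQ_count_dd_cdens: "(\<lambda>M. count_dd t M d / M) \<longlonglongrightarrow> cdens t d"
proof -
  have "cdens t d = lim (\<lambda>M. count_dd t M d / M)"
    by (simp add: cdens_def count_dd_def)
  then show ?thesis
    using convergent_count_dd convergent_LIMSEQ_iff by metis
qed

lemma card_good_residues_le_cdens: "card (good_residues k t d) / 2 ^ Suc k \<le> cdens t d"
proof (rule LIMSEQ_le[OF _ LIMSEQ_count_dd_cdens])
  show "(\<lambda>M. card (good_residues k t d) / 2 ^ Suc k - 2 ^ Suc k / real M) \<longlonglongrightarrow> card (good_residues k t d) / 2 ^ Suc k"
    using tendsto_diff[OF tendsto_const lim_const_over_n[of "2 ^ Suc k"]] by simp
  show "\<exists>N. \<forall>M\<ge>N. card (good_residues k t d) / 2 ^ Suc k - 2 ^ Suc k / real M \<le> count_dd t M d / M"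
    using count_dd_ratio_bounds(1)[where k = k and t = t and d = d] by (intro exI[of _ 1]) auto
qed

lemma cdens_nonneg: "0 \<le> cdens t d"
  using card_good_residues_le_cdens[of 0 t d] by (simp add: order_trans[OF _ card_good_residues_le_cdens])

lemma sum_cdens_le_1:
  assumes "finite F"
  shows "(\<Sum>d\<in>F. cdens t d) \<le> 1"
proof (rule LIMSEQ_le_const2)
  show "(\<lambda>M. \<Sum>d\<in>F. count_dd t M d / M) \<longlonglongrightarrow> (\<Sum>d\<in>F. cdens t d)"
    by (intro tendsto_sum LIMSEQ_count_dd_cdens)
  have "(\<Sum>d\<in>F. count_dd t M d / M) \<le> 1" if "0 < M" for M
  proof -
    have "(\<Sum>d\<in>F. count_dd t M d) = card (\<Union>d\<in>F. {n. n < M \<and> dd t n = d})"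
      unfolding count_dd_def by (rule card_UN_disjoint[symmetric]) (use assms in auto)
    also have "\<dots> \<le> card {..<M}"
      by (rule card_mono) auto
    finally have "real (\<Sum>d\<in>F. count_dd t M d) \<le> M"
      by (simp only: card_lessThan of_nat_le_iff)
    then show ?thesis
      using that by (simp add: sum_divide_distrib[symmetric] divide_le_eq)
  qed
  then show "\<exists>N. \<forall>M\<ge>N. (\<Sum>d\<in>F. count_dd t M d / M) \<le> 1"
    by (intro exI[of _ 1]) auto
qed

lemma cdens_summable: "cdens t summable_on UNIV"
  using cdens_nonneg sum_cdens_le_1 by (intro nonneg_bdd_above_summable_on bdd_aboveI2) auto

lemma infsum_cdens_le_1: "(\<Sum>\<^sub>\<infinity>d. cdens t d) \<le> 1"
  using cdens_summable sum_cdens_le_1 by (rule infsum_le_finite_sums)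

lemma
  fixes k t :: nat and z :: "int \<Rightarrow> complex"
  defines "G \<equiv> {s. no_high_carry k t s}"
  shows summable_good_density: "(\<lambda>d. card (good_residues k t d) / 2 ^ Suc k :: real) summable_on UNIV"
    and infsum_good_density: "(\<Sum>\<^sub>\<infinity>d. card (good_residues k t d) / 2 ^ Suc k :: real) = card G / 2 ^ Suc k"
    and infsum_good_density_mult:
      "(\<Sum>\<^sub>\<infinity>d. of_real (card (good_residues k t d) / 2 ^ Suc k) * z d) = (\<Sum>s\<in>G. z (dd t s)) / 2 ^ Suc k"
proof -
  have fin: "finite G"
    by (simp add: G_def finite_no_high_carry)
  have good: "good_residues k t d = {s \<in> G. dd t s = d}" for d
    by (simp add: good_residues_def G_def)
  have zero: "card (good_residues k t d) = 0" if "d \<notin> dd t ` G" for d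
  proof -
    have "good_residues k t d = {}"
      using that by (auto simp: good)
    then show ?thesis by simp
  qed
  show "(\<lambda>d. card (good_residues k t d) / 2 ^ Suc k :: real) summable_on UNIV"
    using fin zero by (intro summable_on_finite_support[of "dd t ` G"]) auto
  have "(\<Sum>\<^sub>\<infinity>d. card (good_residues k t d) / 2 ^ Suc k :: real)
      = (\<Sum>d\<in>dd t ` G. card (good_residues k t d)) / 2 ^ Suc k"
    using fin zero by (subst infsum_finite_support[of "dd t ` G"]) (auto simp: sum_divide_distrib)
  also have "(\<Sum>d\<in>dd t ` G. card (good_residues k t d)) = card G"
    using sum.image_gen[OF fin, of "\<lambda>_. 1::nat" "dd t"] by (simp add: good)
  finally show "(\<Sum>\<^sub>\<infinity>d. card (good_residues k t d) / 2 ^ Suc k :: real) = card G / 2 ^ Suc k" .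
  have "(\<Sum>\<^sub>\<infinity>d. of_real (card (good_residues k t d) / 2 ^ Suc k) * z d)
      = (\<Sum>d\<in>dd t ` G. of_nat (card (good_residues k t d)) * z d) / 2 ^ Suc k"
    using fin zero by (subst infsum_finite_support[of "dd t ` G"]) (auto simp: sum_divide_distrib)
  also have "(\<Sum>d\<in>dd t ` G. of_nat (card (good_residues k t d)) * z d) = (\<Sum>s\<in>G. z (dd t s))"
    using sum.image_gen[OF fin, of "\<lambda>s. z (dd t s)" "dd t"] by (simp add: good)
  finally show "(\<Sum>\<^sub>\<infinity>d. of_real (card (good_residues k t d) / 2 ^ Suc k) * z d) = (\<Sum>s\<in>G. z (dd t s)) / 2 ^ Suc k" .
qed

section \<open>The characteristic function\<close>

lemma gam_eq_infsum: "gam t \<theta> = (\<Sum>\<^sub>\<infinity>d. of_real (cdens t d) * cis (of_int d * \<theta>))"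
  by (simp add: gam_def cis_conv_exp mult.assoc)

lemma card_no_high_carry_add_bad: "card {s. no_high_carry k t s} + card (bad_residues k t) = 2 ^ Suc k"
proof -
  have "{..<2 ^ Suc k} = {s. no_high_carry k t s} \<union> bad_residues k t"
    by (auto simp: bad_residues_def no_high_carry_def)
  moreover have "card ({s. no_high_carry k t s} \<union> bad_residues k t)
      = card {s. no_high_carry k t s} + card (bad_residues k t)"
    by (rule card_Un_disjoint) (auto simp: finite_no_high_carry finite_bad_residues bad_residues_def)
  ultimately show ?thesis
    by (metis card_lessThan)
qed

lemma norm_gam_sub_carry_free_sum_le:
  "cmod (gam t \<theta> - (\<Sum>s | no_high_carry k t s. cis (of_int (dd t s) * \<theta>)) / 2 ^ Suc k)
    \<le> card (bad_residues k t) / 2 ^ Suc k"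
proof -
  define p :: real where "p = 2 ^ Suc k"
  have "card {s. no_high_carry k t s} / p = 1 - card (bad_residues k t) / p"
    using card_no_high_carry_add_bad[of k t] by (simp add: p_def field_simps flip: of_nat_add)
  moreover have "cmod (gam t \<theta> - (\<Sum>s | no_high_carry k t s. cis (of_int (dd t s) * \<theta>)) / p)
      \<le> (\<Sum>\<^sub>\<infinity>d. cdens t d) - card {s. no_high_carry k t s} / p"
    unfolding gam_eq_infsum p_def
    using norm_infsum_weighted_diff_le[OF cdens_summable[of t] summable_good_density[of k t],
        where z = "\<lambda>d. cis (of_int d * \<theta>)"]
      infsum_good_density[of k t] infsum_good_density_mult[of k t "\<lambda>d. cis (of_int d * \<theta>)"]
      card_good_residues_le_cdens[of k t]
    by simp
  ultimately show ?thesis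
    using infsum_cdens_le_1[of t] by (simp add: p_def)
qed

lemma norm_carry_free_sum_sub_char_sum_le:
  "cmod ((\<Sum>s | no_high_carry k t s. cis (of_int (dd t s) * \<theta>)) / 2 ^ Suc k
      - (char_sum (Suc k) t 0 \<theta> + char_sum (Suc k) t 1 \<theta>))
    \<le> card (bad_residues k t) / 2 ^ Suc k"
proof -
  let ?z = "\<lambda>s. cis (of_int (dd t s) * \<theta>)"
  have "{..<2 ^ Suc k} = {s. no_high_carry k t s} \<union> bad_residues k t"
    "{s. no_high_carry k t s} \<inter> bad_residues k t = {}"
    by (auto simp: bad_residues_def no_high_carry_def)
  then have "(\<Sum>s<2 ^ Suc k. ?z s) = (\<Sum>s | no_high_carry k t s. ?z s) + (\<Sum>s\<in>bad_residues k t. ?z s)"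
    using sum.union_disjoint[OF finite_no_high_carry finite_bad_residues] by metis
  then have "(\<Sum>s | no_high_carry k t s. ?z s) / 2 ^ Suc k - (char_sum (Suc k) t 0 \<theta> + char_sum (Suc k) t 1 \<theta>)
      = - (\<Sum>s\<in>bad_residues k t. ?z s) / 2 ^ Suc k"
    using char_sum_add[of "Suc k" t \<theta>] by (simp add: add_divide_distrib)
  moreover have "cmod (\<Sum>s\<in>bad_residues k t. ?z s) \<le> card (bad_residues k t)"
    using norm_sum[of ?z "bad_residues k t"] by simp
  ultimately show ?thesis
    by (simp add: norm_divide norm_power divide_right_mono)
qed

lemma norm_gam_sub_char_sum_le:
  "cmod (gam t \<theta> - (char_sum (Suc k) t 0 \<theta> + char_sum (Suc k) t 1 \<theta>)) \<le> 4 * real t / 2 ^ Suc k"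
proof -
  have "cmod (gam t \<theta> - (char_sum (Suc k) t 0 \<theta> + char_sum (Suc k) t 1 \<theta>))
      \<le> card (bad_residues k t) / 2 ^ Suc k + card (bad_residues k t) / 2 ^ Suc k"
    by (rule norm_diff_triangle_le[OF norm_gam_sub_carry_free_sum_le norm_carry_free_sum_sub_char_sum_le])
  also have "\<dots> \<le> 4 * real t / 2 ^ Suc k"
    using of_nat_mono[OF card_bad_residues_le[of k t], where 'a = real] by (simp add: field_simps)
  finally show ?thesis .
qed

lemma gam_0: "gam 0 \<theta> = 1"
  using norm_gam_sub_char_sum_le[of 0 \<theta> 0] by (simp add: char_sum_zero)

lemma norm_gam_sub_exp_le_pow:
  assumes \<theta>: "\<bar>\<theta>\<bar> \<le> 4" and t: "0 < t"
  shows "cmod (gam t \<theta> - exp (- (vv t / 2) * \<theta>\<^sup>2))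
    \<le> 22 * real (blocks01 t) * local_err \<theta> + (4 * real t + 14) / 2 ^ J"
proof -
  define k where "k = Suc J + t"
  define l where "l = local_err \<theta>"
  define N where "N = real (blocks01 t)"
  have l: "0 \<le> l" by (simp add: l_def local_err_nonneg)
  have N: "1 \<le> N" using blocks01_pos[OF t] by (simp add: N_def)
  have changes: "real (bit_changes t) \<le> 2 * N"
    using bit_changes_le_blocks01[of t] by (simp add: N_def)
  have "cmod (gam t \<theta> - (char_sum (Suc k) t 0 \<theta> + char_sum (Suc k) t 1 \<theta>)) \<le> 4 * real t / 2 ^ Suc k"
    by (rule norm_gam_sub_char_sum_le)
  also have "\<dots> \<le> 4 * real t / 2 ^ J"
    by (intro divide_left_mono power_increasing) (auto simp: k_def)
  finally have approx: "cmod (gam t \<theta> - (char_sum (Suc k) t 0 \<theta> + char_sum (Suc k) t 1 \<theta>)) \<le> 4 * real t / 2 ^ J" .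
  have "err_potential (Suc (Suc J) + t) t \<theta> \<le> 3 * l + 28 / 2 ^ Suc (Suc J) + 4 * l * bit_changes t"
    using err_potential_le_bit_changes[OF \<theta>, of t t J] by (simp add: l_def less_exp)
  also have "\<dots> \<le> 3 * l * N + 7 / 2 ^ J + 4 * l * (2 * N)"
    using l N changes by (intro add_mono mult_left_mono) (auto simp: mult_le_cancel_left1)
  finally have "cmod (char_sum (Suc k) t 0 \<theta> + char_sum (Suc k) t 1 \<theta> - exp (- (vv t / 2) * \<theta>\<^sup>2))
      \<le> 2 * (3 * l * N + 7 / 2 ^ J + 4 * l * (2 * N))"
    using norm_char_sum_add_sub_le[of "Suc k" t \<theta>] by (simp add: k_def)
  with approx have "cmod (gam t \<theta> - exp (- (vv t / 2) * \<theta>\<^sup>2))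
      \<le> 4 * real t / 2 ^ J + 2 * (3 * l * N + 7 / 2 ^ J + 4 * l * (2 * N))"
    by (rule norm_diff_triangle_le)
  also have "\<dots> = 22 * N * l + (4 * real t + 14) / 2 ^ J"
    by (simp add: field_simps)
  finally show ?thesis
    by (simp add: N_def l_def)
qed

lemma norm_gam_sub_exp_le:
  assumes "\<bar>\<theta>\<bar> \<le> 4"
  shows "cmod (gam t \<theta> - exp (- (vv t / 2) * \<theta>\<^sup>2)) \<le> 1100 * real (blocks01 t) * \<bar>\<theta>\<bar> ^ 3"
proof (cases "t = 0")
  case False
  have "(\<lambda>J. 22 * real (blocks01 t) * local_err \<theta> + (4 * real t + 14) / 2 ^ J) \<longlonglongrightarrow> 22 * real (blocks01 t) * local_err \<theta> + 0"
    by (intro tendsto_add tendsto_const LIMSEQ_divide_realpow_zero) simp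
  then have "cmod (gam t \<theta> - exp (- (vv t / 2) * \<theta>\<^sup>2)) \<le> 22 * real (blocks01 t) * local_err \<theta>"
    using norm_gam_sub_exp_le_pow[OF assms] False by (intro LIMSEQ_le_const) auto
  then show ?thesis
    by (simp add: local_err_def)
qed (simp add: gam_0)

theorem proposition3p9:
  shows "\<exists>L::real. \<forall>(t::nat) (\<theta>::real). \<bar>\<theta>\<bar> \<le> pi \<longrightarrow>
    cmod (gam t \<theta> - complex_of_real (exp (- (vv t / 2) * \<theta>^2)))
      \<le> L * real (blocks01 t) * \<bar>\<theta>\<bar>^3"
proof (intro exI allI impI)
  fix t :: nat and \<theta> :: real
  assume "\<bar>\<theta>\<bar> \<le> pi"
  then have "\<bar>\<theta>\<bar> \<le> 4"
    using pi_less_4 by linarith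
  then show "cmod (gam t \<theta> - complex_of_real (exp (- (vv t / 2) * \<theta>^2))) \<le> 1100 * real (blocks01 t) * \<bar>\<theta>\<bar>^3"
    by (rule norm_gam_sub_exp_le)
qed

end
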